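(* For any integer $n\ge0$, $B^*$ maximizes $j$, i.e. $j(D)\le j(B^* )$ for all $D\ge0$, where $$j(D):=\frac{1}{(F_{2n+1}+G_{2n+1})(D)}\left[D^{2n+1}+(B^* )^{2n+1}\frac{G_{2n+1}(D)}{F_{2n+1}(B^* )}\right].$$
   Context: $F_q(y):=\int_0^\infty u^{q-1}e^{yu-u^2/2}\,\mathrm{d}u$ and $G_q(y):=F_q(-y)$. $B^*>0$ is the unique zero of the strictly decreasing function $B\mapsto(2n+1)-BF'_{2n+1}(B)/F_{2n+1}(B)$. Moreover, $\frac{\partial}{\partial B}\frac{B^{2n+1}}{F_{2n+1}(B)}>0$ iff $B<B^*$. *)

theory Defs
  imports "HOL-Analysis.Analysis"
begin

definition F :: "nat \<Rightarrow> real \<Rightarrow> real" where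
  "F q y = (\<integral>u\<in>{0<..}. u ^ (q - 1) * exp (y * u - u\<^sup>2 / 2) \<partial>lborel)"

definition G :: "nat \<Rightarrow> real \<Rightarrow> real" where
  "G q y = F q (- y)"

definition j :: "nat \<Rightarrow> real \<Rightarrow> real \<Rightarrow> real" where
  "j n Bs D = (D ^ (2*n+1) + Bs ^ (2*n+1) * G (2*n+1) D / F (2*n+1) Bs)
              / (F (2*n+1) D + G (2*n+1) D)"

end

theory Submission
  imports Defs "HOL-Probability.Probability"
begin

text \<open>
  Write q = 2n+1 and c = B*^q / F_q(B*). Then j(B*) = c, and j(D) \<le> c amounts to
  D^q / F_q(D) \<le> B*^q / F_q(B*). Normalised, u^(q-1) exp(Bu - u^2/2) is a probability density
  on (0, \<infinity>) whose mean is F_(q+1)(B) / F_q(B) = F_q'(B) / F_q(B), so Jensen's inequality for exp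
  gives F_q(D) \<ge> F_q(B) exp((D - B) F_q'(B) / F_q(B)). At B = B* the exponent is q (D/B* - 1),
  and exp(q (x - 1)) \<ge> x^q finishes the argument.
\<close>

text \<open>Indexing by \<open>Suc k\<close> sidesteps the truncated exponent \<open>q - 1\<close> of the definition (\<open>F 0 = F 1\<close>).\<close>

lemma F_Suc: "F (Suc k) y = (\<integral>u\<in>{0<..}. u ^ k * exp (y * u - u\<^sup>2 / 2) \<partial>lborel)"
  unfolding F_def by simp

lemma power_le_fact_mult_exp:
  fixes u :: real assumes "u \<ge> 0" shows "u ^ k \<le> fact k * exp u"
proof -
  obtain t where t: "exp u = (\<Sum>m<Suc k. u ^ m / fact m) + exp t / fact (Suc k) * u ^ Suc k"
    using Maclaurin_exp_le[of u "Suc k"] by blast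
  have "u ^ k / fact k \<le> (\<Sum>m<Suc k. u ^ m / fact m)"
    using member_le_sum[of k "{..<Suc k}" "\<lambda>m. u ^ m / fact m"] assms by auto
  also have "\<dots> \<le> exp u" using t assms by simp
  finally show ?thesis by (simp add: field_simps)
qed

lemma power_le_exp_linear:
  fixes x :: real assumes "x \<ge> 0" shows "x ^ q \<le> exp (real q * (x - 1))"
proof -
  have "x ^ q \<le> exp (x - 1) ^ q"
    using assms exp_ge_add_one_self[of "x - 1"] by (intro power_mono) auto
  also have "\<dots> = exp (real q * (x - 1))" by (rule exp_of_nat_mult[symmetric])
  finally show ?thesis .
qed

lemma abs_exp_minus_linear_le: "\<bar>exp (x::real) - 1 - x\<bar> \<le> exp \<bar>x\<bar> * x\<^sup>2 / 2"
proof -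
  obtain t where t: "\<bar>t\<bar> \<le> \<bar>x\<bar>" "exp x = (\<Sum>m<2. x ^ m / fact m) + exp t / fact 2 * x ^ 2"
    using Maclaurin_exp_le[of x 2] by blast
  then have "\<bar>exp x - 1 - x\<bar> = exp t * x\<^sup>2 / 2" by (simp add: numeral_2_eq_2)
  also have "\<dots> \<le> exp \<bar>x\<bar> * x\<^sup>2 / 2" using t(1) by (intro divide_right_mono mult_right_mono) auto
  finally show ?thesis .
qed

text \<open>Since \<open>u^k \<le> k! e^u\<close>, the integrand is dominated by a multiple of the \<open>N(y+1, 1)\<close> density.\<close>

lemma set_integrable_gaussian_moment:
  "set_integrable lborel {0<..} (\<lambda>u::real. u ^ k * exp (y * u - u\<^sup>2 / 2))"
proof (rule set_integrable_bound)
  let ?f = "\<lambda>u. (fact k * exp ((y+1)\<^sup>2/2) * sqrt (2*pi)) * normal_density (y+1) 1 u"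
  show "set_integrable lborel {0<..} ?f"
    unfolding set_integrable_def by (rule integrable_mult_indicator) auto
  show "set_borel_measurable lborel {0<..} (\<lambda>u::real. u ^ k * exp (y * u - u\<^sup>2 / 2))"
    unfolding set_borel_measurable_def
    by (intro borel_measurable_scaleR borel_measurable_indicator
        borel_measurable_continuous_onI continuous_intros) auto
  show "AE u in lborel. u \<in> {0<..} \<longrightarrow> norm (u ^ k * exp (y * u - u\<^sup>2 / 2)) \<le> norm (?f u)"
  proof (intro AE_I2 impI)
    fix u :: real assume u: "u \<in> {0<..}"
    have "norm (u ^ k * exp (y * u - u\<^sup>2 / 2)) \<le> fact k * exp u * exp (y * u - u\<^sup>2 / 2)"
      using power_le_fact_mult_exp[of u k] u by (simp add: mult_right_mono)
    also have "\<dots> = ?f u"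
      unfolding normal_density_def by (simp add: exp_add[symmetric] power2_eq_square field_simps)
    finally show "norm (u ^ k * exp (y * u - u\<^sup>2 / 2)) \<le> norm (?f u)" by simp
  qed
qed

lemma F_Suc_pos: "F (Suc k) y > 0"
proof -
  let ?w = "\<lambda>u::real. u ^ k * exp (y * u - u\<^sup>2 / 2)"
  have int: "integrable lborel (\<lambda>u. indicator {0<..} u * ?w u)"
    using set_integrable_gaussian_moment unfolding set_integrable_def by simp
  have "F (Suc k) y \<ge> 0"
    unfolding F_Suc set_lebesgue_integral_def by (intro integral_nonneg_AE) (auto simp: indicator_def)
  moreover have "F (Suc k) y \<noteq> 0"
  proof
    assume "F (Suc k) y = 0"
    then have zero: "(\<integral>u\<in>{0<..}. indicator {0<..} u * ?w u \<partial>lborel) = 0"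
      unfolding F_Suc set_lebesgue_integral_def
      by (simp add: mult.assoc[symmetric] indicator_inter_arith[symmetric])
    then have "{0::real<..} \<in> null_sets lborel"
      using null_if_pos_func_has_zero_int[OF int _ _ zero] by auto
    then have "{0::real<..1} \<in> null_sets lborel" by (rule null_sets_subset) auto
    then show False by (simp add: null_sets_def)
  qed
  ultimately show ?thesis by linarith
qed

lemma F_Suc_linear_approx:
  assumes "\<bar>h\<bar> \<le> 1"
  shows "\<bar>F (Suc k) (y + h) - F (Suc k) y - h * F (Suc (Suc k)) y\<bar>
           \<le> h\<^sup>2 / 2 * F (Suc (Suc (Suc k))) (y + 1)"
proof -
  let ?w = "\<lambda>y u::real. u ^ k * exp (y * u - u\<^sup>2 / 2)"
  let ?g = "\<lambda>u::real. ?w y u * (exp (h * u) - 1 - h * u)"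
  let ?K = "\<lambda>u::real. u ^ Suc (Suc k) * exp ((y + 1) * u - u\<^sup>2 / 2)"
  have g_eq: "?g = (\<lambda>u. ?w (y + h) u - ?w y u - h * (u ^ Suc k * exp (y * u - u\<^sup>2 / 2)))"
    by (auto simp: algebra_simps exp_add[symmetric])
  have i1: "set_integrable lborel {0<..} (?w (y + h))"
    and i2: "set_integrable lborel {0<..} (?w y)"
    by (rule set_integrable_gaussian_moment)+
  have i3: "set_integrable lborel {0<..} (\<lambda>u. h * (u ^ Suc k * exp (y * u - u\<^sup>2 / 2)))"
    by (rule set_integrable_mult_right[OF set_integrable_gaussian_moment])
  have ig: "set_integrable lborel {0<..} ?g"
    unfolding g_eq by (intro set_integral_diff(1) i1 i2 i3)
  have "(\<integral>u\<in>{0<..}. ?g u \<partial>lborel) = F (Suc k) (y + h) - F (Suc k) y - h * F (Suc (Suc k)) y"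
    unfolding g_eq set_integral_diff(2)[OF set_integral_diff(1)[OF i1 i2] i3]
      set_integral_diff(2)[OF i1 i2] set_integral_mult_right F_Suc ..
  moreover have "\<bar>\<integral>u\<in>{0<..}. ?g u \<partial>lborel\<bar> \<le> (\<integral>u\<in>{0<..}. h\<^sup>2 / 2 * ?K u \<partial>lborel)"
  proof -
    have "\<bar>?g u\<bar> \<le> h\<^sup>2 / 2 * ?K u" if u: "u > 0" for u
    proof -
      have "\<bar>?g u\<bar> \<le> ?w y u * (exp \<bar>h * u\<bar> * (h * u)\<^sup>2 / 2)"
        using u abs_exp_minus_linear_le[of "h * u"] by (simp add: abs_mult mult_left_mono)
      also have "\<dots> \<le> ?w y u * (exp u * (h * u)\<^sup>2 / 2)"
        using u assms by (intro mult_left_mono divide_right_mono mult_right_mono)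
          (auto simp: abs_mult mult_left_le_one_le)
      also have "\<dots> = h\<^sup>2 / 2 * ?K u"
        by (simp add: algebra_simps power2_eq_square exp_add[symmetric])
      finally show ?thesis .
    qed
    then have "(\<integral>u\<in>{0<..}. \<bar>?g u\<bar> \<partial>lborel) \<le> (\<integral>u\<in>{0<..}. h\<^sup>2 / 2 * ?K u \<partial>lborel)"
      using set_integrable_mult_right[OF set_integrable_gaussian_moment, of "h\<^sup>2 / 2" "Suc (Suc k)"]
      by (intro set_integral_mono set_integrable_abs ig) auto
    then show ?thesis
      using set_integral_norm_bound[OF ig] by simp
  qed
  ultimately show ?thesis unfolding F_Suc by simp
qed

lemma F_Suc_has_real_derivative: "(F (Suc k) has_real_derivative F (Suc (Suc k)) y) (at y)"
proof -
  define C where "C = F (Suc (Suc (Suc k))) (y + 1)"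
  have "((\<lambda>h. (F (Suc k) (y + h) - F (Suc k) y) / h - F (Suc (Suc k)) y) \<longlongrightarrow> 0) (at 0)"
  proof (rule Lim_null_comparison)
    have "eventually (\<lambda>h::real. h \<noteq> 0 \<and> \<bar>h\<bar> < 1) (at 0)"
      unfolding eventually_at by (intro exI[of _ 1]) auto
    then show "\<forall>\<^sub>F h in at 0. norm ((F (Suc k) (y + h) - F (Suc k) y) / h - F (Suc (Suc k)) y)
                              \<le> \<bar>h\<bar> * C / 2"
    proof (rule eventually_mono)
      fix h :: real assume h: "h \<noteq> 0 \<and> \<bar>h\<bar> < 1"
      have "norm ((F (Suc k) (y + h) - F (Suc k) y) / h - F (Suc (Suc k)) y)
              = \<bar>F (Suc k) (y + h) - F (Suc k) y - h * F (Suc (Suc k)) y\<bar> / \<bar>h\<bar>"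
        using h by (simp add: field_simps)
      also have "\<dots> \<le> (h\<^sup>2 / 2 * C) / \<bar>h\<bar>"
        using F_Suc_linear_approx[of h k y] h unfolding C_def by (intro divide_right_mono) auto
      also have "\<dots> = \<bar>h\<bar> * C / 2"
        using h by (simp add: power2_eq_square field_simps)
      finally show "norm ((F (Suc k) (y + h) - F (Suc k) y) / h - F (Suc (Suc k)) y)
                      \<le> \<bar>h\<bar> * C / 2" .
    qed
    show "((\<lambda>h::real. \<bar>h\<bar> * C / 2) \<longlongrightarrow> 0) (at 0)"
      by (intro tendsto_eq_intros) auto
  qed
  then show ?thesis
    unfolding DERIV_def by (rule LIM_zero_cancel)
qed

lemma F_Suc_jensen:
  "F (Suc k) B * exp ((D - B) * (F (Suc (Suc k)) B / F (Suc k) B)) \<le> F (Suc k) D"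
proof -
  define m where "m = F (Suc (Suc k)) B / F (Suc k) B"
  define E where "E = exp ((D - B) * m)"
  let ?w = "\<lambda>u::real. u ^ k * exp (B * u - u\<^sup>2 / 2)"
  let ?v = "\<lambda>u::real. u ^ Suc k * exp (B * u - u\<^sup>2 / 2)"
  have i1: "set_integrable lborel {0<..} (\<lambda>u. (E * (1 - (D - B) * m)) * ?w u)"
    and i2: "set_integrable lborel {0<..} (\<lambda>u. (E * (D - B)) * ?v u)"
    by (rule set_integrable_mult_right[OF set_integrable_gaussian_moment])+
  let ?r = "\<lambda>u. (E * (1 - (D - B) * m)) * ?w u + (E * (D - B)) * ?v u"
  have "F (Suc k) B * E = E * ((1 - (D - B) * m) * F (Suc k) B + (D - B) * F (Suc (Suc k)) B)"
    using F_Suc_pos[of k B] unfolding m_def by (simp add: field_simps)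
  also have "\<dots> = (\<integral>u\<in>{0<..}. ?r u \<partial>lborel)"
    unfolding set_integral_add(2)[OF i1 i2] set_integral_mult_right F_Suc by (simp add: algebra_simps)
  also have "\<dots> \<le> (\<integral>u\<in>{0<..}. u ^ k * exp (D * u - u\<^sup>2 / 2) \<partial>lborel)"
  proof (rule set_integral_mono[OF set_integral_add(1)[OF i1 i2] set_integrable_gaussian_moment])
    \<comment> \<open>tangent line of \<open>exp\<close> at the mean \<open>m\<close>; its linear part integrates to zero\<close>
    fix u :: real assume "u \<in> {0<..}"
    then have "?r u = ?w u * E * (1 + (D - B) * (u - m))"
      by (simp add: algebra_simps)
    also have "\<dots> \<le> ?w u * E * exp ((D - B) * (u - m))"
      using \<open>u \<in> {0<..}\<close> unfolding E_def by (intro mult_left_mono exp_ge_add_one_self) auto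
    also have "\<dots> = u ^ k * exp (D * u - u\<^sup>2 / 2)"
      unfolding E_def by (simp add: exp_add[symmetric] algebra_simps)
    finally show "?r u \<le> u ^ k * exp (D * u - u\<^sup>2 / 2)" .
  qed
  finally show ?thesis unfolding E_def m_def F_Suc .
qed

lemma power_div_F_le_at_critical:
  assumes "B > 0" "D \<ge> 0" and crit: "B * F (Suc (Suc k)) B = real (Suc k) * F (Suc k) B"
  shows "D ^ Suc k / F (Suc k) D \<le> B ^ Suc k / F (Suc k) B"
proof -
  have FB: "F (Suc k) B > 0" and FD: "F (Suc k) D > 0" by (rule F_Suc_pos)+
  have mean: "F (Suc (Suc k)) B / F (Suc k) B = real (Suc k) / B"
    using crit assms(1) FB by (simp add: field_simps)
  have "D ^ Suc k * F (Suc k) B = B ^ Suc k * ((D / B) ^ Suc k * F (Suc k) B)"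
    using assms(1) by (simp add: power_divide)
  also have "\<dots> \<le> B ^ Suc k * (exp (real (Suc k) * (D / B - 1)) * F (Suc k) B)"
    using power_le_exp_linear[of "D / B" "Suc k"] assms(1,2) FB
    by (intro mult_left_mono mult_right_mono) auto
  also have "\<dots> = B ^ Suc k * (F (Suc k) B * exp ((D - B) * (F (Suc (Suc k)) B / F (Suc k) B)))"
    unfolding mean using assms(1) by (simp add: field_simps)
  also have "\<dots> \<le> B ^ Suc k * F (Suc k) D"
    using F_Suc_jensen[of k B D] assms(1) by (intro mult_left_mono) auto
  finally show ?thesis using FB FD by (simp add: field_simps)
qed

theorem lemma4p2:
  fixes n :: nat and Bs D :: real
  assumes "Bs > 0"
    and "real (2*n+1) - Bs * deriv (F (2*n+1)) Bs / F (2*n+1) Bs = 0"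
    and "D \<ge> 0"
  shows "j n Bs D \<le> j n Bs Bs"
proof -
  define k where "k = 2 * n"
  define c where "c = Bs ^ Suc k / F (Suc k) Bs"
  have pos: "F (Suc k) y > 0" for y by (rule F_Suc_pos)
  have "deriv (F (Suc k)) Bs = F (Suc (Suc k)) Bs"
    by (rule DERIV_imp_deriv[OF F_Suc_has_real_derivative])
  then have crit: "Bs * F (Suc (Suc k)) Bs = real (Suc k) * F (Suc k) Bs"
    using assms(2) pos[of Bs] unfolding k_def by (simp add: field_simps)
  have "D ^ Suc k \<le> c * F (Suc k) D"
    using power_div_F_le_at_critical[OF assms(1,3) crit] pos[of D] unfolding c_def
    by (simp add: field_simps)
  moreover have "j n Bs D = (D ^ Suc k + c * F (Suc k) (- D)) / (F (Suc k) D + F (Suc k) (- D))"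
    unfolding j_def G_def c_def k_def by (simp add: mult.assoc)
  moreover have "j n Bs Bs = c"
  proof -
    have "j n Bs Bs = (c * F (Suc k) Bs + c * F (Suc k) (- Bs)) / (F (Suc k) Bs + F (Suc k) (- Bs))"
      using pos[of Bs] unfolding j_def G_def c_def k_def by (simp add: mult.assoc)
    also have "\<dots> = c"
      using pos[of Bs] pos[of "- Bs"] by (simp add: distrib_left[symmetric])
    finally show ?thesis .
  qed
  ultimately show ?thesis
    using pos[of D] pos[of "- D"] by (simp add: divide_le_eq algebra_simps)
qed

end
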